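(* Assume the setting in the context. For every choice of real coefficients $\{(\alpha_k,\beta_k)\}_{k=2}^K$ with $\alpha_k+\beta_k=1$ for all $k=2,\dots,K$, and for every $x\in\mathbb{R}^N$, $$T(x)=\sum_{k=1}^K L_k(x_{\mathcal C_k}).$$
   Context: Setting. Let $V=\{1,\dots,N\}$ and let $\mathcal G=(V,\mathcal E)$ be an undirected decomposable graph whose maximal cliques form a perfect sequence $\mathcal C_1,\dots,\mathcal C_K$. For $k=1,\dots,K$ define the histories $\mathcal H_k=\mathcal C_1\cup\cdots\cup\mathcal C_k$. For $k=2,\dots,K$ define the separators $\mathcal S_k=\mathcal H_{k-1}\cap\mathcal C_k$. Perfectness means that for each $k\ge2$ there is $j<k$ with $\mathcal S_k\subseteq\mathcal C_j$. For $k=2,\dots,K$ let $q(k)=\min\{j:\mathcal S_k\subseteq\mathcal C_j\}$, so that $q(k)<k$. For $j=1,\dots,K$ let $\mathcal Q_j=\{k\in\{2,\dots,K\}:q(k)=j\}$. Let $\Sigma\in\mathbb R^{N\times N}$ be symmetric positive definite and Markov with respect to $\mathcal G$, i.e. $(\Sigma^{-1})_{i,j}=0$ whenever $i\neq j$ and $\{i,j\}\notin\mathcal E$. Notation. For $U\subseteq V$: - $\Sigma_U$ is the principal submatrix of $\Sigma$ with rows and columns indexed by $U$; - $I_U$ is the $|U|\times|U|$ identity matrix; - $x_U$ is the subvector of $x$ with entries indexed by $U$. For $U\subseteq W\subseteq V$ and a matrix $A$ indexed by $U$, $[A]^W$ is the $|W|\times|W|$ matrix indexed by $W$ that equals $A$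 on $U\times U$ and is $0$ elsewhere. Test statistic. Define $T(x)=x^Tx-x^T\Sigma^{-1}x-\ln\det\Sigma$. Local matrices and constants. Given real coefficients $\alpha_k,\beta_k$ ($k=2,\dots,K$), define $$J_1=\big(I_{\mathcal C_1}-\Sigma_{\mathcal C_1}^{-1}\big)-\sum_{j\in\mathcal Q_1}\beta_j\big[I_{\mathcal S_j}-\Sigma_{\mathcal S_j}^{-1}\big]^{\mathcal C_1},$$ and, for $k=2,\dots,K$, $$J_k=\big(I_{\mathcal C_k}-\Sigma_{\mathcal C_k}^{-1}\big)-\sum_{j\in\mathcal Q_k}\beta_j\big[I_{\mathcal S_j}-\Sigma_{\mathcal S_j}^{-1}\big]^{\mathcal C_k}-\alpha_k\big[I_{\mathcal S_k}-\Sigma_{\mathcal S_k}^{-1}\big]^{\mathcal C_k}.$$ Define $$e_1=\ln\det\Sigma_{\mathcal C_1}-\sum_{j\in\mathcal Q_1}\beta_j\ln\det\Sigma_{\mathcal S_j},$$ and, for $k\ge2$, $$e_k=\ln\det\Sigma_{\mathcal C_k}-\sum_{j\in\mathcal Q_k}\beta_j\ln\det\Sigma_{\mathcal S_j}-\alpha_k\ln\det\Sigma_{\mathcal S_k}.$$ The local statistics are $L_k(x_{\mathcal C_k})=x_{\mathcal C_k}^TJ_kx_{\mathcal C_k}-e_k$. *)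

theory Defs
  imports "HOL-Analysis.Analysis"
begin

text \<open>Matrices indexed by natural numbers, represented as functions nat => nat => real;
  a matrix "indexed by U" is one whose relevant entries are those in U x U.\<close>

definition idm :: "nat \<Rightarrow> nat \<Rightarrow> real" where
  "idm i j = (if i = j then 1 else 0)"

definition subm :: "nat set \<Rightarrow> (nat \<Rightarrow> nat \<Rightarrow> real) \<Rightarrow> nat \<Rightarrow> nat \<Rightarrow> real" where
  "subm U A i j = (if i \<in> U \<and> j \<in> U then A i j else 0)"

definition padm :: "nat set \<Rightarrow> nat set \<Rightarrow> (nat \<Rightarrow> nat \<Rightarrow> real) \<Rightarrow> nat \<Rightarrow> nat \<Rightarrow> real" where
  "padm U W A i j = (if i \<in> W \<and> j \<in> W then (if i \<in> U \<and> j \<in> U then A i j else 0) else 0)"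

definition det_on :: "nat set \<Rightarrow> (nat \<Rightarrow> nat \<Rightarrow> real) \<Rightarrow> real" where
  "det_on U A = (\<Sum>p\<in>{p. p permutes U}. of_int (sign p) * (\<Prod>i\<in>U. A i (p i)))"

definition inv_on :: "nat set \<Rightarrow> (nat \<Rightarrow> nat \<Rightarrow> real) \<Rightarrow> nat \<Rightarrow> nat \<Rightarrow> real" where
  "inv_on U A = (SOME B. (\<forall>i\<in>U. \<forall>j\<in>U. (\<Sum>k\<in>U. A i k * B k j) = idm i j)
                      \<and> (\<forall>i j. (i \<notin> U \<or> j \<notin> U) \<longrightarrow> B i j = 0))"

definition qf :: "nat set \<Rightarrow> (nat \<Rightarrow> nat \<Rightarrow> real) \<Rightarrow> (nat \<Rightarrow> real) \<Rightarrow> real" where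
  "qf U A x = (\<Sum>i\<in>U. \<Sum>j\<in>U. x i * A i j * x j)"

definition sym_pos_def_on :: "nat set \<Rightarrow> (nat \<Rightarrow> nat \<Rightarrow> real) \<Rightarrow> bool" where
  "sym_pos_def_on U A \<longleftrightarrow> (\<forall>i\<in>U. \<forall>j\<in>U. A i j = A j i)
      \<and> (\<forall>x. (\<exists>i\<in>U. x i \<noteq> 0) \<longrightarrow> qf U A x > 0)"

definition ugraph :: "nat set \<Rightarrow> nat set set \<Rightarrow> bool" where
  "ugraph V E \<longleftrightarrow> (\<forall>e\<in>E. \<exists>i\<in>V. \<exists>j\<in>V. i \<noteq> j \<and> e = {i, j})"

definition clique :: "nat set \<Rightarrow> nat set set \<Rightarrow> nat set \<Rightarrow> bool" where
  "clique V E W \<longleftrightarrow> W \<subseteq> V \<and> (\<forall>i\<in>W. \<forall>j\<in>W. i \<noteq> j \<longrightarrow> {i, j} \<in> E)"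

definition max_clique :: "nat set \<Rightarrow> nat set set \<Rightarrow> nat set \<Rightarrow> bool" where
  "max_clique V E W \<longleftrightarrow> clique V E W \<and> (\<forall>W'. clique V E W' \<and> W \<subseteq> W' \<longrightarrow> W' = W)"

definition hist :: "(nat \<Rightarrow> nat set) \<Rightarrow> nat \<Rightarrow> nat set" where
  "hist C k = (\<Union>j\<in>{1..k}. C j)"

definition sep :: "(nat \<Rightarrow> nat set) \<Rightarrow> nat \<Rightarrow> nat set" where
  "sep C k = hist C (k - 1) \<inter> C k"

definition perfect_max_clique_seq :: "nat set \<Rightarrow> nat set set \<Rightarrow> (nat \<Rightarrow> nat set) \<Rightarrow> nat \<Rightarrow> bool" where
  "perfect_max_clique_seq V E C K \<longleftrightarrow> 1 \<le> K \<and> inj_on C {1..K}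
      \<and> C ` {1..K} = {W. max_clique V E W}
      \<and> (\<forall>k\<in>{2..K}. \<exists>j\<in>{1..<k}. sep C k \<subseteq> C j)"

definition qidx :: "(nat \<Rightarrow> nat set) \<Rightarrow> nat \<Rightarrow> nat" where
  "qidx C k = (LEAST j. 1 \<le> j \<and> sep C k \<subseteq> C j)"

definition Qset :: "(nat \<Rightarrow> nat set) \<Rightarrow> nat \<Rightarrow> nat \<Rightarrow> nat set" where
  "Qset C K j = {k\<in>{2..K}. qidx C k = j}"

definition markov :: "nat set \<Rightarrow> nat set set \<Rightarrow> (nat \<Rightarrow> nat \<Rightarrow> real) \<Rightarrow> bool" where
  "markov V E S \<longleftrightarrow> (\<forall>i\<in>V. \<forall>j\<in>V. i \<noteq> j \<and> {i, j} \<notin> E \<longrightarrow> inv_on V (subm V S) i j = 0)"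

definition IminusInv :: "(nat \<Rightarrow> nat \<Rightarrow> real) \<Rightarrow> nat set \<Rightarrow> nat \<Rightarrow> nat \<Rightarrow> real" where
  "IminusInv S U i j = (if i \<in> U \<and> j \<in> U then idm i j - inv_on U (subm U S) i j else 0)"

definition ldet :: "(nat \<Rightarrow> nat \<Rightarrow> real) \<Rightarrow> nat set \<Rightarrow> real" where
  "ldet S U = ln (det_on U (subm U S))"

definition Tstat :: "nat set \<Rightarrow> (nat \<Rightarrow> nat \<Rightarrow> real) \<Rightarrow> (nat \<Rightarrow> real) \<Rightarrow> real" where
  "Tstat V S x = qf V idm x - qf V (inv_on V (subm V S)) x - ldet S V"

definition Jloc :: "(nat \<Rightarrow> nat set) \<Rightarrow> nat \<Rightarrow> (nat \<Rightarrow> nat \<Rightarrow> real) \<Rightarrow> (nat \<Rightarrow> real) \<Rightarrow> (nat \<Rightarrow> real)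
     \<Rightarrow> nat \<Rightarrow> nat \<Rightarrow> nat \<Rightarrow> real" where
  "Jloc C K S \<alpha> \<beta> k i j =
     IminusInv S (C k) i j
     - (\<Sum>l\<in>Qset C K k. \<beta> l * padm (sep C l) (C k) (IminusInv S (sep C l)) i j)
     - (if k \<ge> 2 then \<alpha> k * padm (sep C k) (C k) (IminusInv S (sep C k)) i j else 0)"

definition eloc :: "(nat \<Rightarrow> nat set) \<Rightarrow> nat \<Rightarrow> (nat \<Rightarrow> nat \<Rightarrow> real) \<Rightarrow> (nat \<Rightarrow> real) \<Rightarrow> (nat \<Rightarrow> real)
     \<Rightarrow> nat \<Rightarrow> real" where
  "eloc C K S \<alpha> \<beta> k =
     ldet S (C k) - (\<Sum>l\<in>Qset C K k. \<beta> l * ldet S (sep C l))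
     - (if k \<ge> 2 then \<alpha> k * ldet S (sep C k) else 0)"

definition Lloc :: "(nat \<Rightarrow> nat set) \<Rightarrow> nat \<Rightarrow> (nat \<Rightarrow> nat \<Rightarrow> real) \<Rightarrow> (nat \<Rightarrow> real) \<Rightarrow> (nat \<Rightarrow> real)
     \<Rightarrow> nat \<Rightarrow> (nat \<Rightarrow> real) \<Rightarrow> real" where
  "Lloc C K S \<alpha> \<beta> k x = qf (C k) (Jloc C K S \<alpha> \<beta> k) x - eloc C K S \<alpha> \<beta> k"

end

theory Submission
  imports Defs "Jordan_Normal_Form.Determinant"
begin

text \<open>
  Glue the cliques one at a time along the histories \<open>H_k = H_(k-1) \<union> C_k\<close>. Because every
  separator lies in an earlier clique, no vertex of \<open>H_(k-1) - S_k\<close> is adjacent to a vertex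
  of \<open>C_k - S_k\<close>; the Markov property, which passes from \<open>\<Sigma>\<close> down to every \<open>\<Sigma>_(H_k)\<close>, then
  makes \<open>(\<Sigma>_(H_k))\<^sup>-\<^sup>1\<close> vanish between these two sets. For such a matrix the Schur complement
  formula gives \<open>(\<Sigma>_(H_k))\<^sup>-\<^sup>1 = [(\<Sigma>_(H_(k-1)))\<^sup>-\<^sup>1] + [(\<Sigma>_(C_k))\<^sup>-\<^sup>1] - [(\<Sigma>_(S_k))\<^sup>-\<^sup>1]\<close>, and Jacobi's
  complementary minor identity gives \<open>det \<Sigma>_(H_k) det \<Sigma>_(S_k) = det \<Sigma>_(H_(k-1)) det \<Sigma>_(C_k)\<close>.
  So \<open>I - \<Sigma>\<^sup>-\<^sup>1\<close> and \<open>ln det \<Sigma>\<close> are sums of clique terms minus separator terms, and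
  \<open>\<alpha>_k + \<beta>_k = 1\<close> lets each separator term be shared between \<open>C_k\<close> and \<open>C_(q(k))\<close>.
\<close>

definition mat_mult_on :: "nat set \<Rightarrow> (nat \<Rightarrow> nat \<Rightarrow> real) \<Rightarrow> (nat \<Rightarrow> nat \<Rightarrow> real) \<Rightarrow> nat \<Rightarrow> nat \<Rightarrow> real" where
  "mat_mult_on U A B i j = (\<Sum>k\<in>U. A i k * B k j)"

definition is_inv_on :: "nat set \<Rightarrow> (nat \<Rightarrow> nat \<Rightarrow> real) \<Rightarrow> (nat \<Rightarrow> nat \<Rightarrow> real) \<Rightarrow> bool" where
  "is_inv_on U M B \<longleftrightarrow> (\<forall>i\<in>U. \<forall>j\<in>U. mat_mult_on U M B i j = idm i j) \<and> (\<forall>i j. (i \<notin> U \<or> j \<notin> U) \<longrightarrow> B i j = 0)"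

lemma inv_on_is_inv_on_def: "inv_on U M = (SOME B. is_inv_on U M B)"
  unfolding inv_on_def is_inv_on_def mat_mult_on_def ..

text \<open>Transfer to \<^typ>\<open>real mat\<close> along the increasing enumeration of \<open>U\<close>.\<close>

definition enum :: "nat set \<Rightarrow> nat \<Rightarrow> nat" where
  "enum U i = sorted_list_of_set U ! i"

definition enum_index :: "nat set \<Rightarrow> nat \<Rightarrow> nat" where
  "enum_index U = inv_into {0..<card U} (enum U)"

lemma bij_betw_enum: "finite U \<Longrightarrow> bij_betw (enum U) {0..<card U} U"
  unfolding enum_def by (rule bij_betw_nth) (auto simp: atLeast0LessThan)

lemma enum_in: "finite U \<Longrightarrow> i < card U \<Longrightarrow> enum U i \<in> U"
  using bij_betw_enum[of U] by (auto dest: bij_betwE)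

lemma enum_index_less: "finite U \<Longrightarrow> u \<in> U \<Longrightarrow> enum_index U u < card U"
  using bij_betw_inv_into[OF bij_betw_enum[of U]] unfolding enum_index_def by (auto dest: bij_betwE)

lemma enum_enum_index: "finite U \<Longrightarrow> u \<in> U \<Longrightarrow> enum U (enum_index U u) = u"
  unfolding enum_index_def using bij_betw_enum[of U] by (simp add: bij_betw_inv_into_right)

lemma enum_index_enum: "finite U \<Longrightarrow> i < card U \<Longrightarrow> enum_index U (enum U i) = i"
  unfolding enum_index_def using bij_betw_enum[of U] by (simp add: bij_betw_inv_into_left)

lemma enum_eq_iff: "finite U \<Longrightarrow> i < card U \<Longrightarrow> j < card U \<Longrightarrow> enum U i = enum U j \<longleftrightarrow> i = j"
  by (metis enum_index_enum)

definition to_mat :: "nat set \<Rightarrow> (nat \<Rightarrow> nat \<Rightarrow> real) \<Rightarrow> real mat" where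
  "to_mat U A = mat (card U) (card U) (\<lambda>(i,j). A (enum U i) (enum U j))"

definition of_mat :: "nat set \<Rightarrow> real mat \<Rightarrow> nat \<Rightarrow> nat \<Rightarrow> real" where
  "of_mat U X i j = (if i \<in> U \<and> j \<in> U then X $$ (enum_index U i, enum_index U j) else 0)"

lemma to_mat_carrier [simp]: "to_mat U A \<in> carrier_mat (card U) (card U)"
  by (simp add: to_mat_def)

lemma to_mat_index: "finite U \<Longrightarrow> i \<in> U \<Longrightarrow> j \<in> U \<Longrightarrow> to_mat U A $$ (enum_index U i, enum_index U j) = A i j"
  by (simp add: to_mat_def enum_index_less enum_enum_index)

lemma to_mat_eq_iff: "finite U \<Longrightarrow> to_mat U X = to_mat U Y \<longleftrightarrow> (\<forall>i\<in>U. \<forall>j\<in>U. X i j = Y i j)"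
proof
  assume "finite U" "to_mat U X = to_mat U Y"
  then show "\<forall>i\<in>U. \<forall>j\<in>U. X i j = Y i j" by (metis to_mat_index)
next
  assume "finite U" "\<forall>i\<in>U. \<forall>j\<in>U. X i j = Y i j"
  then show "to_mat U X = to_mat U Y"
    by (intro eq_matI) (auto simp: to_mat_def enum_in)
qed

lemma to_mat_of_mat: "finite U \<Longrightarrow> X \<in> carrier_mat (card U) (card U) \<Longrightarrow> to_mat U (of_mat U X) = X"
  by (intro eq_matI) (auto simp: to_mat_def of_mat_def enum_in enum_index_enum)

lemma to_mat_idm: "finite U \<Longrightarrow> to_mat U idm = 1\<^sub>m (card U)"
  by (intro eq_matI) (auto simp: to_mat_def idm_def enum_eq_iff)

lemma to_mat_mat_mult_on: "finite U \<Longrightarrow> to_mat U (mat_mult_on U A B) = to_mat U A * to_mat U B"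
proof (intro eq_matI)
  fix i j assume U: "finite U" and ij: "i < dim_row (to_mat U A * to_mat U B)" "j < dim_col (to_mat U A * to_mat U B)"
  have "(to_mat U A * to_mat U B) $$ (i,j) = (\<Sum>k\<in>{0..<card U}. A (enum U i) (enum U k) * B (enum U k) (enum U j))"
    using ij by (simp add: to_mat_def scalar_prod_def)
  also have "\<dots> = (\<Sum>k\<in>U. A (enum U i) k * B k (enum U j))"
    by (rule sum.reindex_bij_betw[OF bij_betw_enum[OF U]])
  finally show "to_mat U (mat_mult_on U A B) $$ (i, j) = (to_mat U A * to_mat U B) $$ (i, j)"
    using ij by (simp add: to_mat_def mat_mult_on_def)
qed (auto simp: to_mat_def)

lemma det_on_cong: "(\<And>i j. i \<in> U \<Longrightarrow> j \<in> U \<Longrightarrow> A i j = B i j) \<Longrightarrow> det_on U A = det_on U B"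
  unfolding det_on_def
  by (intro sum.cong refl arg_cong2[where f="(*)"] prod.cong) (auto simp: permutes_in_image)

lemma det_on_eq_det_to_mat:
  assumes U: "finite U"
  shows "det_on U A = Determinant.det (to_mat U A)"
proof -
  let ?n = "card U"
  let ?f = "enum U"
  have bf: "bij_betw ?f {0..<?n} U" by (rule bij_betw_enum[OF U])
  let ?F = "\<lambda>\<pi> x. if x \<in> U then ?f (\<pi> (inv_into {0..<?n} ?f x)) else x"
  have bF: "bij_betw ?F {\<pi>. \<pi> permutes {0..<?n}} {\<pi>. \<pi> permutes U}"
    by (rule bij_betw_permutations[OF bf])
  have "Determinant.det (to_mat U A) = (\<Sum>q | q permutes {0..<?n}. of_int (sign q) * (\<Prod>i = 0..<?n. A (?f i) (?f (q i))))"
    unfolding det_def'[OF to_mat_carrier]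
    by (intro sum.cong refl arg_cong2[where f="(*)"] prod.cong) (auto simp: to_mat_def permutes_in_image)
  also have "\<dots> = (\<Sum>q | q permutes {0..<?n}. of_int (sign (?F q)) * (\<Prod>i\<in>U. A i (?F q i)))"
  proof (intro sum.cong refl)
    fix q assume q: "q \<in> {q. q permutes {0..<?n}}"
    have fU: "?f ` {0..<?n} = U" using bf by (simp add: bij_betw_def)
    have "?F q = map_permutation {0..<?n} ?f q"
      unfolding map_permutation_def restrict_id_def fU by (auto simp: fun_eq_iff)
    then have sign: "sign (?F q) = sign q"
      using sign_map_permutation[of ?f "{0..<?n}" q] q bf by (simp add: bij_betw_def)
    have "(\<Prod>i\<in>U. A i (?F q i)) = (\<Prod>k\<in>{0..<?n}. A (?f k) (?F q (?f k)))"
      by (rule prod.reindex_bij_betw[OF bf, symmetric])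
    also have "\<dots> = (\<Prod>k\<in>{0..<?n}. A (?f k) (?f (q k)))"
      using bf by (intro prod.cong refl) (auto simp: bij_betw_inv_into_left enum_in[OF U])
    finally show "of_int (sign q) * (\<Prod>i = 0..<?n. A (?f i) (?f (q i))) = of_int (sign (?F q)) * (\<Prod>i\<in>U. A i (?F q i))"
      using sign by simp
  qed
  also have "\<dots> = det_on U A"
    unfolding det_on_def
    by (rule sum.reindex_bij_betw[OF bF, where g = "\<lambda>p. of_int (sign p) * (\<Prod>i\<in>U. A i (p i))"])
  finally show ?thesis ..
qed

lemma det_on_mat_mult_on: "finite V \<Longrightarrow> det_on V (mat_mult_on V A B) = det_on V A * det_on V B"
  by (simp add: det_on_eq_det_to_mat to_mat_mat_mult_on det_mult[OF to_mat_carrier to_mat_carrier])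

lemma det_on_subm: "det_on U (subm U M) = det_on U M"
  by (rule det_on_cong) (simp add: subm_def)

lemma inv_on_subm: "inv_on U (subm U M) = inv_on U M"
proof -
  have "is_inv_on U (subm U M) = is_inv_on U M"
    by (auto simp: fun_eq_iff is_inv_on_def mat_mult_on_def subm_def)
  then show ?thesis unfolding inv_on_is_inv_on_def by simp
qed

lemma sum_idm_left:
  assumes "finite R" "k \<in> R" shows "(\<Sum>r\<in>R. idm k r * f r) = f k"
proof -
  have "(\<Sum>r\<in>R. idm k r * f r) = (\<Sum>r\<in>R. if k = r then f r else 0)" by (rule sum.cong) (auto simp: idm_def)
  then show ?thesis using assms by simp
qed

lemma sum_idm_right:
  assumes "finite R" "k \<in> R" shows "(\<Sum>r\<in>R. f r * idm r k) = f k"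
proof -
  have "(\<Sum>r\<in>R. f r * idm r k) = (\<Sum>r\<in>R. if k = r then f r else 0)" by (rule sum.cong) (auto simp: idm_def)
  then show ?thesis using assms by simp
qed

lemma sum_sum_mono_neutral:
  assumes V: "finite V" and UV: "U \<subseteq> V"
    and zero: "\<And>i j. i \<in> V \<Longrightarrow> j \<in> V \<Longrightarrow> i \<notin> U \<or> j \<notin> U \<Longrightarrow> f i j = 0"
  shows "(\<Sum>i\<in>V. \<Sum>j\<in>V. f i j) = (\<Sum>i\<in>U. \<Sum>j\<in>U. f i j)"
proof -
  have "(\<Sum>i\<in>V. \<Sum>j\<in>V. f i j) = (\<Sum>i\<in>V. \<Sum>j\<in>U. f i j)"
    by (intro sum.cong refl sum.mono_neutral_right[OF V UV]) (use zero in auto)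
  also have "\<dots> = (\<Sum>i\<in>U. \<Sum>j\<in>U. f i j)"
    by (intro sum.mono_neutral_right[OF V UV]) (use UV in \<open>auto intro!: sum.neutral zero\<close>)
  finally show ?thesis .
qed


lemma det_to_mat_nonzero:
  assumes U: "finite U" and pd: "sym_pos_def_on U M"
  shows "Determinant.det (to_mat U M) \<noteq> 0"
proof
  assume "Determinant.det (to_mat U M) = 0"
  then obtain v where v: "v \<in> carrier_vec (card U)" "v \<noteq> 0\<^sub>v (card U)" "to_mat U M *\<^sub>v v = 0\<^sub>v (card U)"
    using det_0_iff_vec_prod_zero[OF to_mat_carrier] by blast
  obtain i where i: "i < card U" "v $ i \<noteq> 0"
    using v(1,2) by (metis carrier_vecD eq_vecI index_zero_vec(1,2))
  define x where "x = (\<lambda>u. if u \<in> U then v $ enum_index U u else 0)"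
  have x_nonzero: "\<exists>u\<in>U. x u \<noteq> 0"
    using i by (intro bexI[of _ "enum U i"]) (auto simp: x_def enum_in[OF U] enum_index_enum[OF U])
  have Mx: "(\<Sum>w\<in>U. M u w * x w) = 0" if u: "u \<in> U" for u
  proof -
    have "(\<Sum>w\<in>U. M u w * x w) = (\<Sum>k\<in>{0..<card U}. M u (enum U k) * x (enum U k))"
      by (rule sum.reindex_bij_betw[OF bij_betw_enum[OF U], symmetric])
    also have "\<dots> = (to_mat U M *\<^sub>v v) $ enum_index U u"
      using v(1) u U
      by (auto simp: to_mat_def scalar_prod_def x_def enum_in enum_index_enum enum_index_less enum_enum_index
               intro!: sum.cong)
    also have "\<dots> = 0" using v(3) enum_index_less[OF U u] by simp
    finally show ?thesis .
  qed
  have "qf U M x = (\<Sum>u\<in>U. x u * (\<Sum>w\<in>U. M u w * x w))"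
    unfolding qf_def by (simp add: sum_distrib_left mult.assoc)
  also have "\<dots> = 0" using Mx by simp
  finally show False using pd x_nonzero unfolding sym_pos_def_on_def by auto
qed

lemma ex_is_inv_on:
  assumes U: "finite U" and pd: "sym_pos_def_on U M"
  shows "\<exists>B. is_inv_on U M B"
proof -
  from det_non_zero_imp_unit[OF to_mat_carrier det_to_mat_nonzero[OF U pd], of undefined]
  obtain Y where Y: "Y \<in> carrier_mat (card U) (card U)" "to_mat U M * Y = 1\<^sub>m (card U)"
    unfolding Units_def by (auto simp: ring_mat_simps)
  have "to_mat U (mat_mult_on U M (of_mat U Y)) = to_mat U idm"
    using to_mat_mat_mult_on[OF U] to_mat_of_mat[OF U Y(1)] Y(2) to_mat_idm[OF U] by simp
  then have "is_inv_on U M (of_mat U Y)"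
    using to_mat_eq_iff[OF U] unfolding is_inv_on_def of_mat_def by auto
  then show ?thesis by blast
qed

lemma is_inv_on_to_mat: "finite U \<Longrightarrow> is_inv_on U M B \<Longrightarrow> to_mat U M * to_mat U B = 1\<^sub>m (card U)"
  using to_mat_eq_iff[of U "mat_mult_on U M B" idm] by (simp add: is_inv_on_def to_mat_mat_mult_on to_mat_idm)

lemma is_inv_on_to_mat_left: "finite U \<Longrightarrow> is_inv_on U M B \<Longrightarrow> to_mat U B * to_mat U M = 1\<^sub>m (card U)"
  by (rule mat_mult_left_right_inverse[OF to_mat_carrier to_mat_carrier is_inv_on_to_mat])

lemma is_inv_on_unique:
  assumes U: "finite U" and B1: "is_inv_on U M B1" and B2: "is_inv_on U M B2"
  shows "B1 = B2"
proof -
  have "to_mat U B1 = to_mat U B1 * (to_mat U M * to_mat U B2)"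
    by (metis is_inv_on_to_mat[OF U B2] right_mult_one_mat to_mat_carrier)
  also have "\<dots> = (to_mat U B1 * to_mat U M) * to_mat U B2"
    by (rule assoc_mult_mat[symmetric, OF to_mat_carrier to_mat_carrier to_mat_carrier])
  also have "\<dots> = to_mat U B2" by (metis is_inv_on_to_mat_left[OF U B1] left_mult_one_mat to_mat_carrier)
  finally have "\<forall>i\<in>U. \<forall>j\<in>U. B1 i j = B2 i j" using to_mat_eq_iff[OF U] by blast
  then show ?thesis using B1 B2 unfolding is_inv_on_def by (metis ext)
qed

lemma is_inv_on_inv_on: "finite U \<Longrightarrow> sym_pos_def_on U M \<Longrightarrow> is_inv_on U M (inv_on U M)"
  unfolding inv_on_is_inv_on_def by (rule someI_ex[OF ex_is_inv_on])

lemma inv_on_eqI: "finite U \<Longrightarrow> sym_pos_def_on U M \<Longrightarrow> is_inv_on U M B \<Longrightarrow> inv_on U M = B"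
  using is_inv_on_unique is_inv_on_inv_on by blast

lemma inv_on_outside: "finite U \<Longrightarrow> sym_pos_def_on U M \<Longrightarrow> i \<notin> U \<or> j \<notin> U \<Longrightarrow> inv_on U M i j = 0"
  using is_inv_on_inv_on unfolding is_inv_on_def by blast

lemma inv_on_right_inverse:
  "finite U \<Longrightarrow> sym_pos_def_on U M \<Longrightarrow> i \<in> U \<Longrightarrow> j \<in> U \<Longrightarrow> (\<Sum>k\<in>U. M i k * inv_on U M k j) = idm i j"
  using is_inv_on_inv_on unfolding is_inv_on_def mat_mult_on_def by blast

lemma inv_on_left_inverse:
  assumes U: "finite U" and pd: "sym_pos_def_on U M" and ij: "i \<in> U" "j \<in> U"
  shows "(\<Sum>k\<in>U. inv_on U M i k * M k j) = idm i j"
proof -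
  have "to_mat U (mat_mult_on U (inv_on U M) M) = to_mat U idm"
    using is_inv_on_to_mat_left[OF U is_inv_on_inv_on[OF U pd]] by (simp add: to_mat_mat_mult_on[OF U] to_mat_idm[OF U])
  then have "mat_mult_on U (inv_on U M) M i j = idm i j" using to_mat_eq_iff[OF U] ij by blast
  then show ?thesis unfolding mat_mult_on_def .
qed

lemma inv_on_sym:
  assumes U: "finite U" and pd: "sym_pos_def_on U M"
  shows "inv_on U M i j = inv_on U M j i"
proof -
  let ?B = "inv_on U M"
  have "is_inv_on U M (\<lambda>i j. ?B j i)" unfolding is_inv_on_def
  proof (intro conjI ballI allI impI)
    fix i j assume ij: "i \<in> U" "j \<in> U"
    have "mat_mult_on U M (\<lambda>i j. ?B j i) i j = (\<Sum>k\<in>U. ?B j k * M k i)"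
      unfolding mat_mult_on_def using pd ij unfolding sym_pos_def_on_def by (intro sum.cong) auto
    also have "\<dots> = idm i j" using inv_on_left_inverse[OF U pd ij(2) ij(1)] by (simp add: idm_def)
    finally show "mat_mult_on U M (\<lambda>i j. ?B j i) i j = idm i j" .
  next
    fix i j :: nat assume "i \<notin> U \<or> j \<notin> U"
    then show "?B j i = 0" using inv_on_outside[OF U pd] by blast
  qed
  then show ?thesis by (metis inv_on_eqI[OF U pd])
qed

lemma sym_pos_def_on_subset:
  assumes V: "finite V" and pd: "sym_pos_def_on V M" and UV: "U \<subseteq> V"
  shows "sym_pos_def_on U M"
  unfolding sym_pos_def_on_def
proof (intro conjI allI impI ballI)
  fix i j assume "i \<in> U" "j \<in> U" then show "M i j = M j i" using pd UV unfolding sym_pos_def_on_def by blast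
next
  fix x :: "nat \<Rightarrow> real" assume x: "\<exists>i\<in>U. x i \<noteq> 0"
  define x' where "x' = (\<lambda>i. if i \<in> U then x i else 0)"
  have "qf V M x' = qf U M x'"
    unfolding qf_def by (rule sum_sum_mono_neutral[OF V UV]) (auto simp: x'_def)
  also have "\<dots> = qf U M x" unfolding qf_def x'_def by simp
  finally have "qf V M x' = qf U M x" .
  moreover have "\<exists>i\<in>V. x' i \<noteq> 0" using x UV by (auto simp: x'_def)
  ultimately show "qf U M x > 0" using pd unfolding sym_pos_def_on_def by metis
qed

lemma sym_pos_def_on_inv_on:
  assumes U: "finite U" and pd: "sym_pos_def_on U M"
  shows "sym_pos_def_on U (inv_on U M)"
  unfolding sym_pos_def_on_def
proof (intro conjI allI impI ballI)
  fix i j show "inv_on U M i j = inv_on U M j i" by (rule inv_on_sym[OF U pd])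
next
  let ?B = "inv_on U M"
  fix x :: "nat \<Rightarrow> real" assume x: "\<exists>i\<in>U. x i \<noteq> 0"
  define y where "y = (\<lambda>i. \<Sum>j\<in>U. ?B i j * x j)"
  have My: "(\<Sum>j\<in>U. M i j * y j) = x i" if i: "i \<in> U" for i
  proof -
    have "(\<Sum>j\<in>U. M i j * y j) = (\<Sum>j\<in>U. \<Sum>k\<in>U. M i j * ?B j k * x k)"
      unfolding y_def by (simp add: sum_distrib_left mult.assoc)
    also have "\<dots> = (\<Sum>k\<in>U. (\<Sum>j\<in>U. M i j * ?B j k) * x k)"
      by (subst sum.swap) (simp add: sum_distrib_right)
    also have "\<dots> = x i"
      using inv_on_right_inverse[OF U pd i] sum_idm_left[OF U i] by simp
    finally show ?thesis .
  qed
  have y_nonzero: "\<exists>i\<in>U. y i \<noteq> 0"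
    using x My by (metis (no_types, lifting) mult_zero_right sum.neutral)
  have "qf U ?B x = (\<Sum>i\<in>U. y i * x i)"
    unfolding qf_def y_def by (simp add: sum_distrib_right sum_distrib_left mult_ac)
  also have "\<dots> = (\<Sum>i\<in>U. y i * (\<Sum>j\<in>U. M i j * y j))" using My by simp
  also have "\<dots> = qf U M y"
    unfolding qf_def by (simp add: sum_distrib_left mult.assoc)
  finally show "qf U ?B x > 0" using pd y_nonzero unfolding sym_pos_def_on_def by simp
qed


section \<open>Schur complements and Jacobi's identity\<close>

text \<open>With \<open>P = M\<^sup>-\<^sup>1\<close> on \<open>V = U \<union> R\<close>, the inverse of the principal submatrix \<open>M_U\<close> is
  \<open>P_UU - P_UR (P_RR)\<^sup>-\<^sup>1 P_RU\<close>; the correction is the second term.\<close>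

definition Schur_correction :: "nat set \<Rightarrow> (nat \<Rightarrow> nat \<Rightarrow> real) \<Rightarrow> nat set \<Rightarrow> nat \<Rightarrow> nat \<Rightarrow> real" where
  "Schur_correction V M R i j =
     (\<Sum>r\<in>R. \<Sum>s\<in>R. inv_on V M i r * inv_on R (inv_on V M) r s * inv_on V M s j)"

lemma mat_mult_Schur_correction:
  assumes V: "finite V" and pd: "sym_pos_def_on V M" and UR: "V = U \<union> R" "U \<inter> R = {}" and i: "i \<in> U"
  shows "(\<Sum>k\<in>U. M i k * Schur_correction V M R k j) = - (\<Sum>k\<in>R. M i k * inv_on V M k j)"
proof -
  define P where "P = inv_on V M"
  define Q where "Q = inv_on R P"
  have fU: "finite U" and fR: "finite R" using V UR by auto
  have pdPR: "sym_pos_def_on R P"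
    unfolding P_def by (rule sym_pos_def_on_subset[OF V sym_pos_def_on_inv_on[OF V pd]]) (use UR in auto)
  have PQ: "(\<Sum>r\<in>R. P k r * Q r s) = idm k s" if "k \<in> R" "s \<in> R" for k s
    unfolding Q_def by (rule inv_on_right_inverse[OF fR pdPR that])
  have MP: "(\<Sum>k\<in>U. M i k * P k r) = - (\<Sum>k\<in>R. M i k * P k r)" if r: "r \<in> R" for r
  proof -
    have "(\<Sum>k\<in>U. M i k * P k r) + (\<Sum>k\<in>R. M i k * P k r) = idm i r"
      using inv_on_right_inverse[OF V pd, of i r] i r UR unfolding P_def by (simp add: sum.union_disjoint[OF fU fR])
    also have "\<dots> = 0" using i r UR(2) by (auto simp: idm_def)
    finally show ?thesis by simp
  qed
  have "(\<Sum>k\<in>U. M i k * Schur_correction V M R k j) = (\<Sum>k\<in>U. \<Sum>r\<in>R. \<Sum>s\<in>R. M i k * P k r * Q r s * P s j)"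
    unfolding Schur_correction_def P_def[symmetric] Q_def[symmetric] by (simp add: sum_distrib_left mult.assoc)
  also have "\<dots> = (\<Sum>r\<in>R. \<Sum>s\<in>R. \<Sum>k\<in>U. M i k * P k r * Q r s * P s j)"
    by (subst sum.swap, rule sum.cong[OF refl], rule sum.swap)
  also have "\<dots> = (\<Sum>r\<in>R. \<Sum>s\<in>R. (\<Sum>k\<in>U. M i k * P k r) * Q r s * P s j)"
    by (simp add: sum_distrib_right)
  also have "\<dots> = - (\<Sum>r\<in>R. \<Sum>s\<in>R. \<Sum>k\<in>R. M i k * P k r * Q r s * P s j)"
    using MP by (simp add: sum_distrib_right sum_negf)
  also have "(\<Sum>r\<in>R. \<Sum>s\<in>R. \<Sum>k\<in>R. M i k * P k r * Q r s * P s j)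
      = (\<Sum>k\<in>R. \<Sum>s\<in>R. \<Sum>r\<in>R. M i k * P k r * Q r s * P s j)"
    by (subst sum.swap, subst sum.swap, rule sum.cong[OF refl], rule sum.swap)
  also have "\<dots> = (\<Sum>k\<in>R. \<Sum>s\<in>R. M i k * (\<Sum>r\<in>R. P k r * Q r s) * P s j)"
    by (simp add: sum_distrib_left sum_distrib_right mult.assoc)
  also have "\<dots> = (\<Sum>k\<in>R. \<Sum>s\<in>R. M i k * (idm k s * P s j))"
    using PQ by (simp add: mult.assoc)
  also have "\<dots> = (\<Sum>k\<in>R. M i k * P k j)"
    by (intro sum.cong refl) (simp add: sum_distrib_left[symmetric] sum_idm_left[OF fR])
  finally show ?thesis unfolding P_def .
qed

lemma inv_on_Schur:
  assumes V: "finite V" and pd: "sym_pos_def_on V M" and UR: "V = U \<union> R" "U \<inter> R = {}"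
  shows "inv_on U M i j = (if i \<in> U \<and> j \<in> U then inv_on V M i j - Schur_correction V M R i j else 0)"
proof -
  let ?P = "inv_on V M" and ?X = "Schur_correction V M R"
  have fU: "finite U" and fR: "finite R" using V UR by auto
  have pdU: "sym_pos_def_on U M" by (rule sym_pos_def_on_subset[OF V pd]) (use UR in auto)
  have "is_inv_on U M (\<lambda>i j. if i \<in> U \<and> j \<in> U then ?P i j - ?X i j else 0)"
    unfolding is_inv_on_def mat_mult_on_def
  proof (intro conjI ballI allI impI)
    fix i j assume i: "i \<in> U" and j: "j \<in> U"
    have "(\<Sum>k\<in>U. M i k * (if k \<in> U \<and> j \<in> U then ?P k j - ?X k j else 0))
        = (\<Sum>k\<in>U. M i k * ?P k j) - (\<Sum>k\<in>U. M i k * ?X k j)"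
      using j by (simp add: right_diff_distrib sum_subtractf)
    also have "\<dots> = (\<Sum>k\<in>U \<union> R. M i k * ?P k j)"
      unfolding mat_mult_Schur_correction[OF V pd UR i] sum.union_disjoint[OF fU fR UR(2)] by simp
    also have "\<dots> = idm i j"
      using inv_on_right_inverse[OF V pd, of i j] i j UR(1) by simp
    finally show "(\<Sum>k\<in>U. M i k * (if k \<in> U \<and> j \<in> U then ?P k j - ?X k j else 0)) = idm i j" .
  qed auto
  then show ?thesis by (simp add: inv_on_eqI[OF fU pdU])
qed

lemma inv_on_block_diagonal:
  assumes R: "finite R" and pd: "sym_pos_def_on R P" and AB: "R = A \<union> B" "A \<inter> B = {}"
    and zero: "\<And>a b. a \<in> A \<Longrightarrow> b \<in> B \<Longrightarrow> P a b = 0"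
  shows "inv_on R P i j = inv_on A P i j + inv_on B P i j"
proof -
  have fA: "finite A" and fB: "finite B" using R AB by auto
  have pdA: "sym_pos_def_on A P" by (rule sym_pos_def_on_subset[OF R pd]) (use AB in auto)
  have pdB: "sym_pos_def_on B P" by (rule sym_pos_def_on_subset[OF R pd]) (use AB in auto)
  have zero': "P b a = 0" if "a \<in> A" "b \<in> B" for a b
    using zero[OF that] pd that AB unfolding sym_pos_def_on_def by auto
  let ?QA = "inv_on A P" and ?QB = "inv_on B P"
  have QA0: "?QA i j = 0" if "i \<notin> A \<or> j \<notin> A" for i j using inv_on_outside[OF fA pdA that] .
  have QB0: "?QB i j = 0" if "i \<notin> B \<or> j \<notin> B" for i j using inv_on_outside[OF fB pdB that] .
  have QA_B: "?QA i j = 0" if "i \<in> B \<or> j \<in> B" for i j using that AB(2) QA0 by blast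
  have QB_A: "?QB i j = 0" if "i \<in> A \<or> j \<in> A" for i j using that AB(2) QB0 by blast
  have "is_inv_on R P (\<lambda>i j. ?QA i j + ?QB i j)"
    unfolding is_inv_on_def mat_mult_on_def
  proof (intro conjI ballI allI impI)
    fix i j assume i: "i \<in> R" and j: "j \<in> R"
    have "(\<Sum>k\<in>R. P i k * (?QA k j + ?QB k j)) = (\<Sum>k\<in>A. P i k * ?QA k j) + (\<Sum>k\<in>B. P i k * ?QB k j)"
      unfolding AB(1) sum.union_disjoint[OF fA fB AB(2)] using AB(2)
      by (intro arg_cong2[where f="(+)"] sum.cong refl) (auto simp: QA0 QB0 QA_B QB_A)
    also have "\<dots> = idm i j"
      using i j AB inv_on_right_inverse[OF fA pdA, of i j] inv_on_right_inverse[OF fB pdB, of i j]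
      by (auto simp: QA0 QB0 QA_B QB_A zero zero' idm_def)
    finally show "(\<Sum>k\<in>R. P i k * (?QA k j + ?QB k j)) = idm i j" .
  next
    fix i j assume "i \<notin> R \<or> j \<notin> R"
    then show "?QA i j + ?QB i j = 0" using AB by (auto simp: QA0 QB0)
  qed
  then show ?thesis using inv_on_eqI[OF R pd] by metis
qed

lemma Schur_correction_union:
  assumes V: "finite V" and pd: "sym_pos_def_on V M" and AB: "A \<union> B \<subseteq> V" "A \<inter> B = {}"
    and zero: "\<And>a b. a \<in> A \<Longrightarrow> b \<in> B \<Longrightarrow> inv_on V M a b = 0"
  shows "Schur_correction V M (A \<union> B) i j = Schur_correction V M A i j + Schur_correction V M B i j"
proof -
  let ?P = "inv_on V M"
  have pdP: "sym_pos_def_on V ?P" by (rule sym_pos_def_on_inv_on[OF V pd])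
  have fA: "finite A" and fB: "finite B" using V AB finite_subset by auto
  have pdA: "sym_pos_def_on A ?P" and pdB: "sym_pos_def_on B ?P" and pdAB: "sym_pos_def_on (A \<union> B) ?P"
    using AB by (auto intro: sym_pos_def_on_subset[OF V pdP])
  have QAB: "inv_on (A \<union> B) ?P r s = inv_on A ?P r s + inv_on B ?P r s" for r s
    by (rule inv_on_block_diagonal[OF _ pdAB refl AB(2) zero]) (use fA fB in auto)
  have "Schur_correction V M (A \<union> B) i j
      = (\<Sum>r\<in>A \<union> B. \<Sum>s\<in>A \<union> B. ?P i r * inv_on A ?P r s * ?P s j)
      + (\<Sum>r\<in>A \<union> B. \<Sum>s\<in>A \<union> B. ?P i r * inv_on B ?P r s * ?P s j)"
    unfolding Schur_correction_def QAB by (simp add: distrib_left distrib_right sum.distrib)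
  also have "\<dots> = Schur_correction V M A i j + Schur_correction V M B i j"
    unfolding Schur_correction_def using fA fB
    by (intro arg_cong2[where f="(+)"] sum_sum_mono_neutral) (auto simp: inv_on_outside[OF fA pdA] inv_on_outside[OF fB pdB])
  finally show ?thesis .
qed

lemma Schur_correction_eq_0:
  assumes V: "finite V" and pd: "sym_pos_def_on V M"
    and zero: "\<And>a b. a \<in> A \<Longrightarrow> b \<in> B \<Longrightarrow> inv_on V M a b = 0" and ij: "i \<in> B \<or> j \<in> B"
  shows "Schur_correction V M A i j = 0"
  unfolding Schur_correction_def using ij zero inv_on_sym[OF V pd] by (auto intro!: sum.neutral)

lemma det_on_unit_columns:
  assumes V: "finite V" and RV: "R \<subseteq> V" and L: "\<And>i j. i \<in> V \<Longrightarrow> j \<in> R \<Longrightarrow> L i j = idm i j"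
  shows "det_on V L = det_on (V - R) L"
proof -
  have sub: "{p. p permutes (V - R)} \<subseteq> {p. p permutes V}" by (auto intro: permutes_subset)
  have "det_on V L = (\<Sum>p\<in>{p. p permutes (V - R)}. of_int (sign p) * (\<Prod>i\<in>V. L i (p i)))"
    unfolding det_on_def
  proof (rule sum.mono_neutral_right[OF finite_permutations[OF V] sub], rule ballI)
    fix p assume p: "p \<in> {p. p permutes V} - {p. p permutes (V - R)}"
    then have pV: "p permutes V" by simp
    have "\<exists>r\<in>R. p r \<noteq> r"
    proof (rule ccontr)
      assume "\<not> ?thesis"
      then have "p permutes (V - R)" using pV permutes_not_in[OF pV] unfolding permutes_def by blast
      then show False using p by simp
    qed
    then obtain r where r: "r \<in> R" "p r \<noteq> r" by blast
    define i where "i = inv_into UNIV p r"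
    have pi: "p i = r" unfolding i_def by (rule permutes_inverses(1)[OF pV])
    have iV: "i \<in> V" unfolding i_def using permutes_in_image[OF permutes_inv[OF pV]] r RV by auto
    have "L i (p i) = 0" using L[OF iV r(1)] pi r by (auto simp: idm_def)
    then show "of_int (sign p) * (\<Prod>i\<in>V. L i (p i)) = 0" using iV V by (auto simp: prod_zero_iff)
  qed
  also have "\<dots> = det_on (V - R) L"
    unfolding det_on_def
  proof (intro sum.cong refl arg_cong2[where f="(*)"])
    fix p assume "p \<in> {p. p permutes (V - R)}"
    then have p: "p permutes (V - R)" by simp
    show "(\<Prod>i\<in>V. L i (p i)) = (\<Prod>i\<in>V - R. L i (p i))"
      by (rule prod.mono_neutral_right[OF V]) (use permutes_not_in[OF p] L RV in \<open>auto simp: idm_def\<close>)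
  qed
  finally show ?thesis .
qed

text \<open>If \<open>N\<close> is the identity with its \<open>R\<close>-columns
  replaced by those of \<open>M\<^sup>-\<^sup>1\<close>, then \<open>N\<close> and \<open>M N\<close> have unit columns on \<open>V - R\<close> and on \<open>R\<close>
  respectively, so \<open>det N = det (M\<^sup>-\<^sup>1)_R\<close> and \<open>det (M N) = det M_(V-R)\<close>.\<close>

lemma det_on_mult_det_on_inv_on:
  assumes V: "finite V" and pd: "sym_pos_def_on V M" and RV: "R \<subseteq> V"
  shows "det_on V M * det_on R (inv_on V M) = det_on (V - R) M"
proof -
  define U where "U = V - R"
  define N where "N = (\<lambda>i j. if j \<in> U then idm i j else inv_on V M i j)"
  have detN: "det_on V N = det_on R (inv_on V M)"
  proof -
    have VU: "V - U = R" using RV by (auto simp: U_def)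
    have "det_on V N = det_on (V - U) N" by (rule det_on_unit_columns) (auto simp: V N_def U_def)
    also have "\<dots> = det_on R (inv_on V M)"
      unfolding VU by (rule det_on_cong) (auto simp: N_def U_def)
    finally show ?thesis .
  qed
  have detMN: "det_on V (mat_mult_on V M N) = det_on U M"
  proof -
    have "det_on V (mat_mult_on V M N) = det_on U (mat_mult_on V M N)"
      unfolding U_def
    proof (rule det_on_unit_columns[OF V RV])
      fix i j assume "i \<in> V" "j \<in> R"
      then show "mat_mult_on V M N i j = idm i j"
        unfolding mat_mult_on_def N_def U_def using inv_on_right_inverse[OF V pd] RV by auto
    qed
    also have "\<dots> = det_on U M"
    proof (rule det_on_cong)
      fix i j assume "i \<in> U" "j \<in> U"
      then show "mat_mult_on V M N i j = M i j"
        unfolding mat_mult_on_def N_def using sum_idm_right[OF V, of j "M i"] by (auto simp: U_def)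
    qed
    finally show ?thesis .
  qed
  show ?thesis using det_on_mat_mult_on[OF V, of M N] detN detMN unfolding U_def by simp
qed

lemma det_on_pos: "finite V \<Longrightarrow> sym_pos_def_on V M \<Longrightarrow> det_on V M > 0"
proof (induction "card V" arbitrary: V)
  case 0
  then show ?case by (simp add: det_on_def)
next
  case (Suc n)
  then obtain r where r: "r \<in> V" by fastforce
  have IH: "det_on (V - {r}) M > 0"
    using Suc r by (intro Suc.hyps(1)) (auto intro: sym_pos_def_on_subset)
  have pdP: "sym_pos_def_on V (inv_on V M)" by (rule sym_pos_def_on_inv_on[OF Suc.prems])
  define x where "x = (\<lambda>i::nat. if i = r then (1::real) else 0)"
  have "qf V (inv_on V M) x = inv_on V M r r"
    unfolding qf_def by (subst sum_sum_mono_neutral[OF Suc.prems(1), of "{r}"]) (use r in \<open>auto simp: x_def\<close>)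
  moreover have "qf V (inv_on V M) x > 0" using pdP r unfolding sym_pos_def_on_def by (auto simp: x_def)
  ultimately have "det_on {r} (inv_on V M) > 0" by (simp add: det_on_def)
  moreover have "det_on V M * det_on {r} (inv_on V M) = det_on (V - {r}) M"
    by (rule det_on_mult_det_on_inv_on[OF Suc.prems]) (use r in auto)
  ultimately show ?case using IH by (metis zero_less_mult_iff not_less_iff_gr_or_eq)
qed

section \<open>Gluing along a separator\<close>

context
  fixes W U C S :: "nat set" and M :: "nat \<Rightarrow> nat \<Rightarrow> real"
  assumes W: "finite W" and pd: "sym_pos_def_on W M" and WUC: "W = U \<union> C" and S: "S = U \<inter> C"
    and inv_on_zero: "\<And>a b. a \<in> U - S \<Longrightarrow> b \<in> C - S \<Longrightarrow> inv_on W M a b = 0"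
begin

lemma inv_on_glue: "inv_on W M i j = inv_on U M i j + inv_on C M i j - inv_on S M i j"
proof -
  let ?P = "inv_on W M" and ?X = "Schur_correction W M"
  define A where "A = U - S"
  define B where "B = C - S"
  have part: "W = U \<union> B" "U \<inter> B = {}" "W = C \<union> A" "C \<inter> A = {}" "W = S \<union> (A \<union> B)" "S \<inter> (A \<union> B) = {}"
    "A \<union> B \<subseteq> W" "A \<inter> B = {}"
    using WUC S by (auto simp: A_def B_def)
  have zero: "?P a b = 0" if "a \<in> A" "b \<in> B" for a b using inv_on_zero that unfolding A_def B_def by blast
  have zero': "?P b a = 0" if "a \<in> A" "b \<in> B" for a b using zero[OF that] inv_on_sym[OF W pd] by simp
  have XA0: "?X A i j = 0" if "i \<in> B \<or> j \<in> B" for i j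
    by (rule Schur_correction_eq_0[OF W pd _ that]) (use zero in blast)
  have XB0: "?X B i j = 0" if "i \<in> A \<or> j \<in> A" for i j
    by (rule Schur_correction_eq_0[OF W pd _ that]) (use zero' in blast)
  have XAB: "?X (A \<union> B) i j = ?X A i j + ?X B i j"
    by (rule Schur_correction_union[OF W pd part(7,8) zero])
  have blocks: "W = A \<union> S \<union> B" "U = A \<union> S" "C = S \<union> B" "A \<inter> S = {}" "B \<inter> S = {}"
    using WUC S by (auto simp: A_def B_def)
  show ?thesis
    unfolding inv_on_Schur[OF W pd part(1,2)] inv_on_Schur[OF W pd part(3,4)] inv_on_Schur[OF W pd part(5,6)] XAB
  proof (cases "i \<in> W \<and> j \<in> W")
    case False
    then show "?P i j = (if i \<in> U \<and> j \<in> U then ?P i j - ?X B i j else 0)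
      + (if i \<in> C \<and> j \<in> C then ?P i j - ?X A i j else 0)
      - (if i \<in> S \<and> j \<in> S then ?P i j - (?X A i j + ?X B i j) else 0)"
      using blocks inv_on_outside[OF W pd] by auto
  next
    case True
    then have "i \<in> A \<or> i \<in> S \<or> i \<in> B" "j \<in> A \<or> j \<in> S \<or> j \<in> B" using blocks by auto
    then show "?P i j = (if i \<in> U \<and> j \<in> U then ?P i j - ?X B i j else 0)
      + (if i \<in> C \<and> j \<in> C then ?P i j - ?X A i j else 0)
      - (if i \<in> S \<and> j \<in> S then ?P i j - (?X A i j + ?X B i j) else 0)"
      using blocks part(8) XA0[of i j] XB0[of i j] zero[of i j] zero'[of j i] by auto
  qed
qed

lemma det_on_glue: "det_on W M * det_on S M = det_on U M * det_on C M"
proof -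
  define A where "A = U - S"
  define B where "B = C - S"
  have part: "B \<subseteq> W" "W - B = U" "B \<subseteq> C" "C - B = S" "W = C \<union> A" "C \<inter> A = {}"
    using WUC S by (auto simp: A_def B_def)
  have pdC: "sym_pos_def_on C M" by (rule sym_pos_def_on_subset[OF W pd]) (use WUC in auto)
  have "det_on B (inv_on C M) = det_on B (inv_on W M)"
  proof (rule det_on_cong)
    fix i j assume ij: "i \<in> B" "j \<in> B"
    have "Schur_correction W M A i j = 0"
      by (rule Schur_correction_eq_0[OF W pd _ disjI1[OF ij(1)]]) (use inv_on_zero in \<open>auto simp: A_def B_def\<close>)
    then show "inv_on C M i j = inv_on W M i j"
      using ij part(3) inv_on_Schur[OF W pd part(5,6)] by auto
  qed
  then have "det_on C M * det_on B (inv_on W M) = det_on S M"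
    using det_on_mult_det_on_inv_on[OF _ pdC part(3)] part(4) W WUC by auto
  moreover have "det_on W M * det_on B (inv_on W M) = det_on U M"
    using det_on_mult_det_on_inv_on[OF W pd part(1)] part(2) by simp
  ultimately show ?thesis by (metis mult.assoc mult.commute)
qed

end

lemma qf_cong: "(\<And>i j. i \<in> U \<Longrightarrow> j \<in> U \<Longrightarrow> A i j = B i j) \<Longrightarrow> qf U A x = qf U B x"
  unfolding qf_def by (intro sum.cong refl) auto

lemma qf_diff: "qf U (\<lambda>i j. A i j - B i j) x = qf U A x - qf U B x"
  unfolding qf_def by (simp add: algebra_simps sum_subtractf)

lemma qf_cmult: "qf U (\<lambda>i j. c * A i j) x = c * qf U A x"
  unfolding qf_def by (simp add: sum_distrib_left mult_ac)

lemma qf_if: "qf U (\<lambda>i j. if P then A i j else 0) x = (if P then qf U A x else 0)"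
  unfolding qf_def by simp

lemma qf_sum: "qf U (\<lambda>i j. \<Sum>l\<in>L. A l i j) x = (\<Sum>l\<in>L. qf U (A l) x)"
proof -
  have "qf U (\<lambda>i j. \<Sum>l\<in>L. A l i j) x = (\<Sum>i\<in>U. \<Sum>j\<in>U. \<Sum>l\<in>L. x i * A l i j * x j)"
    unfolding qf_def by (simp add: sum_distrib_left sum_distrib_right)
  also have "\<dots> = (\<Sum>l\<in>L. \<Sum>i\<in>U. \<Sum>j\<in>U. x i * A l i j * x j)"
    by (subst sum.swap, rule sum.cong[OF refl], rule sum.swap)
  finally show ?thesis unfolding qf_def .
qed

lemma qf_mono_neutral:
  "finite V \<Longrightarrow> T \<subseteq> V \<Longrightarrow> (\<And>i j. i \<notin> T \<or> j \<notin> T \<Longrightarrow> A i j = 0) \<Longrightarrow> qf V A x = qf T A x"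
  unfolding qf_def by (rule sum_sum_mono_neutral) auto

lemma qf_padm:
  assumes "finite C" "T \<subseteq> C" shows "qf C (padm T C A) x = qf T A x"
proof -
  have "qf C (padm T C A) x = qf T (padm T C A) x"
    by (rule qf_mono_neutral[OF assms]) (auto simp: padm_def)
  also have "\<dots> = qf T A x" by (rule qf_cong) (use assms in \<open>auto simp: padm_def\<close>)
  finally show ?thesis .
qed

lemma qf_IminusInv_mono_neutral: "finite V \<Longrightarrow> U \<subseteq> V \<Longrightarrow> qf V (IminusInv M U) x = qf U (IminusInv M U) x"
  by (rule qf_mono_neutral) (auto simp: IminusInv_def)

lemma IminusInv_eq:
  "finite U \<Longrightarrow> sym_pos_def_on U M \<Longrightarrow> IminusInv M U i j = subm U idm i j - inv_on U M i j"
  unfolding IminusInv_def subm_def inv_on_subm using inv_on_outside[of U M i j] by auto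

lemma ldet_eq: "ldet M U = ln (det_on U M)"
  unfolding ldet_def det_on_subm ..

lemma Tstat_eq: "Tstat V M x = qf V (IminusInv M V) x - ldet M V"
  unfolding Tstat_def qf_diff[symmetric] by (intro arg_cong2[where f="(-)"] qf_cong) (simp_all add: IminusInv_def)

text \<open>The separator term \<open>G l\<close> is shared between the cliques \<open>C_(q(l))\<close> (weight \<open>\<beta> l\<close>) and
  \<open>C_l\<close> (weight \<open>\<alpha> l\<close>).\<close>

lemma sum_separator_weights:
  fixes G :: "nat \<Rightarrow> real"
  assumes img: "qidx C ` {2..K} \<subseteq> {1..K}" and weights: "\<forall>k\<in>{2..K}. \<alpha> k + \<beta> k = 1"
  shows "(\<Sum>k\<in>{1..K}. \<Sum>l\<in>Qset C K k. \<beta> l * G l) + (\<Sum>k\<in>{1..K}. if 2 \<le> k then \<alpha> k * G k else 0)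
       = (\<Sum>l\<in>{2..K}. G l)"
proof -
  have "(\<Sum>k\<in>{1..K}. \<Sum>l\<in>Qset C K k. \<beta> l * G l) = (\<Sum>l\<in>{2..K}. \<beta> l * G l)"
    unfolding Qset_def by (rule sum.group[OF _ _ img]) auto
  moreover have "(\<Sum>k\<in>{1..K}. if 2 \<le> k then \<alpha> k * G k else 0) = (\<Sum>l\<in>{2..K}. \<alpha> l * G l)"
  proof -
    have "{k\<in>{1..K}. 2 \<le> k} = {2..K}" by auto
    then show ?thesis by (simp flip: sum.inter_filter)
  qed
  moreover have "(\<Sum>l\<in>{2..K}. \<beta> l * G l) + (\<Sum>l\<in>{2..K}. \<alpha> l * G l) = (\<Sum>l\<in>{2..K}. (\<alpha> l + \<beta> l) * G l)"
    by (simp add: sum.distrib[symmetric] algebra_simps)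
  moreover have "\<dots> = (\<Sum>l\<in>{2..K}. G l)" using weights by simp
  ultimately show ?thesis by simp
qed

lemma hist_Suc: "hist C (Suc k) = hist C k \<union> C (Suc k)"
  unfolding hist_def by (auto simp: atLeastAtMostSuc_conv)

lemma hist_mono: "k \<le> l \<Longrightarrow> hist C k \<subseteq> hist C l"
  unfolding hist_def by (rule UN_mono) auto

lemma subset_hist: "1 \<le> j \<Longrightarrow> j \<le> k \<Longrightarrow> C j \<subseteq> hist C k"
  unfolding hist_def by auto

lemma sep_subset: "sep C k \<subseteq> C k"
  unfolding sep_def by auto

locale perfect_markov =
  fixes N K :: nat and E :: "nat set set" and C :: "nat \<Rightarrow> nat set" and \<Sigma> :: "nat \<Rightarrow> nat \<Rightarrow> real"
  assumes perfect: "perfect_max_clique_seq {1..N} E C K"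
    and pos_def: "sym_pos_def_on {1..N} \<Sigma>"
    and markov: "markov {1..N} E \<Sigma>"
begin

lemma K_in: "K \<in> {1..K}"
  using perfect unfolding perfect_max_clique_seq_def by simp

lemma max_clique_C: "k \<in> {1..K} \<Longrightarrow> max_clique {1..N} E (C k)"
  using perfect unfolding perfect_max_clique_seq_def by blast

lemma C_subset: "k \<in> {1..K} \<Longrightarrow> C k \<subseteq> {1..N}"
  using max_clique_C unfolding max_clique_def clique_def by blast

lemma edge_C: "k \<in> {1..K} \<Longrightarrow> i \<in> C k \<Longrightarrow> j \<in> C k \<Longrightarrow> i \<noteq> j \<Longrightarrow> {i, j} \<in> E"
  using max_clique_C unfolding max_clique_def clique_def by blast

lemma clique_subset_C:
  assumes "clique {1..N} E W"
  shows "\<exists>k\<in>{1..K}. W \<subseteq> C k"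
proof -
  let ?F = "{W'. clique {1..N} E W' \<and> W \<subseteq> W'}"
  have "finite ?F"
    by (rule finite_subset[of _ "Pow {1..N}"]) (auto simp: clique_def)
  moreover have "?F \<noteq> {}" using assms by blast
  ultimately obtain W' where W': "W' \<in> ?F" and "\<forall>W''\<in>?F. W' \<subseteq> W'' \<longrightarrow> W' = W''"
    using finite_has_maximal[of ?F] by blast
  then have "max_clique {1..N} E W'"
    unfolding max_clique_def by blast
  then have "W' \<in> C ` {1..K}" using perfect unfolding perfect_max_clique_seq_def by blast
  then show ?thesis using W' by blast
qed

lemma hist_subset: "k \<le> K \<Longrightarrow> hist C k \<subseteq> {1..N}"
  unfolding hist_def using C_subset by (intro UN_least) auto

lemma hist_K: "hist C K = {1..N}"
proof
  show "{1..N} \<subseteq> hist C K"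
  proof
    fix v assume "v \<in> {1..N}"
    then have "clique {1..N} E {v}" unfolding clique_def by auto
    then obtain k where "k \<in> {1..K}" "{v} \<subseteq> C k" using clique_subset_C by blast
    then show "v \<in> hist C K" unfolding hist_def by auto
  qed
qed (rule hist_subset, simp)

lemma sym_pos_def_on_sub: "U \<subseteq> {1..N} \<Longrightarrow> sym_pos_def_on U \<Sigma>"
  by (rule sym_pos_def_on_subset[OF _ pos_def]) auto

lemma finite_sub: "U \<subseteq> {1..N} \<Longrightarrow> finite U"
  by (meson finite_atLeastAtMost finite_subset)

lemma det_on_pos_sub: "U \<subseteq> {1..N} \<Longrightarrow> det_on U \<Sigma> > 0"
  by (rule det_on_pos[OF finite_sub sym_pos_def_on_sub])

lemma running_intersection:
  "j \<in> {1..K} \<Longrightarrow> T \<subseteq> C j \<Longrightarrow> T \<subseteq> hist C k \<Longrightarrow> 1 \<le> k \<Longrightarrow> \<exists>j'\<in>{1..k}. T \<subseteq> C j'"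
proof (induction j rule: less_induct)
  case (less j)
  show ?case
  proof (cases "j \<le> k")
    case False
    then have "j \<in> {2..K}" using less.prems by auto
    then obtain q where q: "q \<in> {1..<j}" "sep C j \<subseteq> C q"
      using perfect unfolding perfect_max_clique_seq_def by blast
    have "hist C k \<subseteq> hist C (j - 1)" using False by (intro hist_mono) auto
    then have "T \<subseteq> C q" using less.prems q unfolding sep_def by auto
    then show ?thesis using less.IH[of q] q less.prems by auto
  qed (use less.prems in auto)
qed

lemma qidx: "l \<in> {2..K} \<Longrightarrow> sep C l \<subseteq> C (qidx C l) \<and> 1 \<le> qidx C l \<and> qidx C l < l"
proof -
  assume "l \<in> {2..K}"
  then obtain j where j: "j \<in> {1..<l}" "sep C l \<subseteq> C j"
    using perfect unfolding perfect_max_clique_seq_def by blast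
  have "1 \<le> qidx C l \<and> sep C l \<subseteq> C (qidx C l)"
    unfolding qidx_def by (rule LeastI[of _ j]) (use j in auto)
  moreover have "qidx C l \<le> j" unfolding qidx_def by (rule Least_le) (use j in auto)
  ultimately show ?thesis using j by auto
qed

section \<open>The Markov property along the histories\<close>

lemma inv_on_hist_eq_0:
  assumes k: "k \<in> {2..K}" and markov_k: "markov (hist C k) E \<Sigma>"
    and a: "a \<in> hist C (k - 1) - sep C k" and b: "b \<in> C k - sep C k"
  shows "inv_on (hist C k) \<Sigma> a b = 0"
proof -
  have hist_k: "hist C k = hist C (k - 1) \<union> C k" using hist_Suc[of C "k - 1"] k by simp
  have b_new: "b \<notin> hist C (k - 1)" using b unfolding sep_def by auto
  have ab: "a \<in> hist C k" "b \<in> hist C k" "a \<noteq> b" using a b b_new hist_k by auto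
  have "{a, b} \<notin> E"
  proof
    assume "{a, b} \<in> E"
    moreover have "a \<in> {1..N}" "b \<in> {1..N}" using ab hist_subset[of k] k by auto
    ultimately have "clique {1..N} E {a, b}" unfolding clique_def by (auto simp: insert_commute)
    then obtain j where "j \<in> {1..K}" "{a, b} \<subseteq> C j" using clique_subset_C by blast
    then obtain j' where j': "j' \<in> {1..k}" "{a, b} \<subseteq> C j'"
      using running_intersection[of j "{a, b}" k] ab k by auto
    have "j' = k"
    proof (rule ccontr)
      assume "j' \<noteq> k"
      then have "C j' \<subseteq> hist C (k - 1)" using j' by (intro subset_hist) auto
      then show False using j' b_new by auto
    qed
    then show False using j' a unfolding sep_def by auto
  qed
  then show ?thesis
    using markov_k ab unfolding markov_def inv_on_subm by blast
qed

lemma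
  assumes k: "k \<in> {2..K}" and markov_k: "markov (hist C k) E \<Sigma>"
  shows inv_on_hist_step:
      "inv_on (hist C k) \<Sigma> i j = inv_on (hist C (k - 1)) \<Sigma> i j + inv_on (C k) \<Sigma> i j - inv_on (sep C k) \<Sigma> i j"
    and det_on_hist_step:
      "det_on (hist C k) \<Sigma> * det_on (sep C k) \<Sigma> = det_on (hist C (k - 1)) \<Sigma> * det_on (C k) \<Sigma>"
proof -
  have hist_k: "hist C k = hist C (k - 1) \<union> C k" using hist_Suc[of C "k - 1"] k by simp
  have "hist C k \<subseteq> {1..N}" using hist_subset k by simp
  note glue = finite_sub[OF this] sym_pos_def_on_sub[OF this] hist_k sep_def inv_on_hist_eq_0[OF k markov_k]
  show "inv_on (hist C k) \<Sigma> i j = inv_on (hist C (k - 1)) \<Sigma> i j + inv_on (C k) \<Sigma> i j - inv_on (sep C k) \<Sigma> i j"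
    by (rule inv_on_glue[OF glue])
  show "det_on (hist C k) \<Sigma> * det_on (sep C k) \<Sigma> = det_on (hist C (k - 1)) \<Sigma> * det_on (C k) \<Sigma>"
    by (rule det_on_glue[OF glue])
qed

lemma markov_hist_pred:
  assumes k: "k \<in> {2..K}" and markov_k: "markov (hist C k) E \<Sigma>"
  shows "markov (hist C (k - 1)) E \<Sigma>"
  unfolding markov_def inv_on_subm
proof (intro ballI impI)
  fix i j assume i: "i \<in> hist C (k - 1)" and j: "j \<in> hist C (k - 1)" and ij: "i \<noteq> j \<and> {i, j} \<notin> E"
  have kK: "k \<in> {1..K}" using k by auto
  have not_both: "i \<notin> C k \<or> j \<notin> C k" using edge_C[OF kK] ij by blast
  have C_k: "C k \<subseteq> {1..N}" and sep_k: "sep C k \<subseteq> {1..N}"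
    using C_subset[OF kK] sep_subset[of C k] by auto
  have "inv_on (C k) \<Sigma> i j = 0"
    using not_both by (rule inv_on_outside[OF finite_sub[OF C_k] sym_pos_def_on_sub[OF C_k]])
  moreover have "inv_on (sep C k) \<Sigma> i j = 0"
    using not_both sep_subset[of C k] by (intro inv_on_outside[OF finite_sub[OF sep_k] sym_pos_def_on_sub[OF sep_k]]) auto
  moreover have "inv_on (hist C k) \<Sigma> i j = 0"
    using markov_k i j ij hist_Suc[of C "k - 1"] k unfolding markov_def inv_on_subm by auto
  ultimately show "inv_on (hist C (k - 1)) \<Sigma> i j = 0"
    using inv_on_hist_step[OF k markov_k, of i j] by simp
qed

lemma markov_hist: "k \<in> {1..K} \<Longrightarrow> markov (hist C k) E \<Sigma>"
proof (induction "K - k" arbitrary: k)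
  case 0
  then show ?case using markov unfolding hist_K[symmetric] by (simp add: le_antisym)
next
  case (Suc n)
  then have "markov (hist C (Suc k)) E \<Sigma>" by (intro Suc.hyps(1)) auto
  then show ?case using markov_hist_pred[of "Suc k"] Suc by simp
qed

section \<open>Decomposition of \<open>I - \<Sigma>\<^sup>-\<^sup>1\<close> and \<open>ln det \<Sigma>\<close>\<close>

lemma
  assumes k: "k \<in> {2..K}"
  shows IminusInv_hist_step:
      "IminusInv \<Sigma> (hist C k) i j
         = IminusInv \<Sigma> (hist C (k - 1)) i j + IminusInv \<Sigma> (C k) i j - IminusInv \<Sigma> (sep C k) i j"
    and ldet_hist_step:
      "ldet \<Sigma> (hist C k) = ldet \<Sigma> (hist C (k - 1)) + ldet \<Sigma> (C k) - ldet \<Sigma> (sep C k)"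
proof -
  have hist_k: "hist C k = hist C (k - 1) \<union> C k" using hist_Suc[of C "k - 1"] k by simp
  have subsets: "hist C k \<subseteq> {1..N}" "hist C (k - 1) \<subseteq> {1..N}" "C k \<subseteq> {1..N}" "sep C k \<subseteq> {1..N}"
    using hist_subset[of k] hist_k k by (auto simp: sep_def)
  have markov_k: "markov (hist C k) E \<Sigma>" using k by (intro markov_hist) auto
  have "subm (hist C k) idm i j = subm (hist C (k - 1)) idm i j + subm (C k) idm i j - subm (sep C k) idm i j"
    unfolding hist_k sep_def by (auto simp: subm_def idm_def)
  then show "IminusInv \<Sigma> (hist C k) i j
      = IminusInv \<Sigma> (hist C (k - 1)) i j + IminusInv \<Sigma> (C k) i j - IminusInv \<Sigma> (sep C k) i j"
    using inv_on_hist_step[OF k markov_k, of i j]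
      IminusInv_eq[OF finite_sub[OF subsets(1)] sym_pos_def_on_sub[OF subsets(1)]]
      IminusInv_eq[OF finite_sub[OF subsets(2)] sym_pos_def_on_sub[OF subsets(2)]]
      IminusInv_eq[OF finite_sub[OF subsets(3)] sym_pos_def_on_sub[OF subsets(3)]]
      IminusInv_eq[OF finite_sub[OF subsets(4)] sym_pos_def_on_sub[OF subsets(4)]]
    by simp
  note pos = subsets[THEN det_on_pos_sub]
  have "ln (det_on (hist C k) \<Sigma>) + ln (det_on (sep C k) \<Sigma>) = ln (det_on (hist C k) \<Sigma> * det_on (sep C k) \<Sigma>)"
    by (rule ln_mult_pos[OF pos(1,4), symmetric])
  also have "\<dots> = ln (det_on (hist C (k - 1)) \<Sigma>) + ln (det_on (C k) \<Sigma>)"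
    unfolding det_on_hist_step[OF k markov_k] by (rule ln_mult_pos[OF pos(2,3)])
  finally show "ldet \<Sigma> (hist C k) = ldet \<Sigma> (hist C (k - 1)) + ldet \<Sigma> (C k) - ldet \<Sigma> (sep C k)"
    unfolding ldet_eq by simp
qed

lemma IminusInv_hist:
  "k \<in> {1..K} \<Longrightarrow>
     IminusInv \<Sigma> (hist C k) i j = (\<Sum>l=1..k. IminusInv \<Sigma> (C l) i j) - (\<Sum>l=2..k. IminusInv \<Sigma> (sep C l) i j)"
proof (induction k)
  case (Suc k)
  show ?case
  proof (cases "k = 0")
    case False
    then show ?thesis using Suc IminusInv_hist_step[of "Suc k" i j] by simp
  qed (simp add: hist_def)
qed simp

lemma ldet_hist:
  "k \<in> {1..K} \<Longrightarrow> ldet \<Sigma> (hist C k) = (\<Sum>l=1..k. ldet \<Sigma> (C l)) - (\<Sum>l=2..k. ldet \<Sigma> (sep C l))"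
proof (induction k)
  case (Suc k)
  show ?case
  proof (cases "k = 0")
    case False
    then show ?thesis using Suc ldet_hist_step[of "Suc k"] by simp
  qed (simp add: hist_def)
qed simp

lemma sep_subset_V: "l \<in> {2..K} \<Longrightarrow> sep C l \<subseteq> {1..N}"
  using C_subset[of l] sep_subset[of C l] by force

lemma qf_IminusInv_eq_sum:
  "qf {1..N} (IminusInv \<Sigma> {1..N}) x
     = (\<Sum>l=1..K. qf (C l) (IminusInv \<Sigma> (C l)) x) - (\<Sum>l=2..K. qf (sep C l) (IminusInv \<Sigma> (sep C l)) x)"
proof -
  have "IminusInv \<Sigma> {1..N} = (\<lambda>i j. (\<Sum>l=1..K. IminusInv \<Sigma> (C l) i j) - (\<Sum>l=2..K. IminusInv \<Sigma> (sep C l) i j))"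
    using IminusInv_hist[OF K_in] unfolding hist_K by (intro ext)
  then have "qf {1..N} (IminusInv \<Sigma> {1..N}) x
      = (\<Sum>l=1..K. qf {1..N} (IminusInv \<Sigma> (C l)) x) - (\<Sum>l=2..K. qf {1..N} (IminusInv \<Sigma> (sep C l)) x)"
    by (simp only: qf_diff qf_sum)
  also have "(\<Sum>l=1..K. qf {1..N} (IminusInv \<Sigma> (C l)) x) = (\<Sum>l=1..K. qf (C l) (IminusInv \<Sigma> (C l)) x)"
    by (intro sum.cong refl qf_IminusInv_mono_neutral C_subset) auto
  also have "(\<Sum>l=2..K. qf {1..N} (IminusInv \<Sigma> (sep C l)) x) = (\<Sum>l=2..K. qf (sep C l) (IminusInv \<Sigma> (sep C l)) x)"
    by (intro sum.cong refl qf_IminusInv_mono_neutral sep_subset_V) auto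
  finally show ?thesis .
qed

lemma ldet_eq_sum: "ldet \<Sigma> {1..N} = (\<Sum>l=1..K. ldet \<Sigma> (C l)) - (\<Sum>l=2..K. ldet \<Sigma> (sep C l))"
  using ldet_hist[OF K_in] unfolding hist_K .

lemma qf_Jloc:
  assumes k: "k \<in> {1..K}"
  shows "qf (C k) (Jloc C K \<Sigma> \<alpha> \<beta> k) x
    = qf (C k) (IminusInv \<Sigma> (C k)) x - (\<Sum>l\<in>Qset C K k. \<beta> l * qf (sep C l) (IminusInv \<Sigma> (sep C l)) x)
      - (if 2 \<le> k then \<alpha> k * qf (sep C k) (IminusInv \<Sigma> (sep C k)) x else 0)"
proof -
  have fin: "finite (C k)" using C_subset[OF k] by (rule finite_sub)
  have "sep C l \<subseteq> C k" if "l \<in> Qset C K k" for l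
  proof -
    from that have "l \<in> {2..K}" "qidx C l = k" unfolding Qset_def by auto
    then show ?thesis using qidx by metis
  qed
  then have "(\<Sum>l\<in>Qset C K k. \<beta> l * qf (C k) (padm (sep C l) (C k) (IminusInv \<Sigma> (sep C l))) x)
      = (\<Sum>l\<in>Qset C K k. \<beta> l * qf (sep C l) (IminusInv \<Sigma> (sep C l)) x)"
    by (simp add: qf_padm[OF fin])
  then show ?thesis
    unfolding Jloc_def qf_diff qf_sum qf_cmult qf_if qf_padm[OF fin sep_subset[of C k]] by simp
qed

lemma sum_Lloc:
  assumes weights: "\<forall>k\<in>{2..K}. \<alpha> k + \<beta> k = 1"
  shows "(\<Sum>k\<in>{1..K}. Lloc C K \<Sigma> \<alpha> \<beta> k x)
    = ((\<Sum>l=1..K. qf (C l) (IminusInv \<Sigma> (C l)) x) - (\<Sum>l=2..K. qf (sep C l) (IminusInv \<Sigma> (sep C l)) x))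
      - ((\<Sum>l=1..K. ldet \<Sigma> (C l)) - (\<Sum>l=2..K. ldet \<Sigma> (sep C l)))" (is "_ = ?rhs")
proof -
  have img: "qidx C ` {2..K} \<subseteq> {1..K}"
    using qidx by fastforce
  have "(\<Sum>k\<in>{1..K}. Lloc C K \<Sigma> \<alpha> \<beta> k x)
    = (\<Sum>k\<in>{1..K}. (qf (C k) (IminusInv \<Sigma> (C k)) x
          - (\<Sum>l\<in>Qset C K k. \<beta> l * qf (sep C l) (IminusInv \<Sigma> (sep C l)) x)
          - (if 2 \<le> k then \<alpha> k * qf (sep C k) (IminusInv \<Sigma> (sep C k)) x else 0))
        - (ldet \<Sigma> (C k) - (\<Sum>l\<in>Qset C K k. \<beta> l * ldet \<Sigma> (sep C l))
          - (if 2 \<le> k then \<alpha> k * ldet \<Sigma> (sep C k) else 0)))"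
    unfolding Lloc_def eloc_def using qf_Jloc by (intro sum.cong refl) auto
  also have "\<dots> = ((\<Sum>k\<in>{1..K}. qf (C k) (IminusInv \<Sigma> (C k)) x)
        - ((\<Sum>k\<in>{1..K}. \<Sum>l\<in>Qset C K k. \<beta> l * qf (sep C l) (IminusInv \<Sigma> (sep C l)) x)
          + (\<Sum>k\<in>{1..K}. if 2 \<le> k then \<alpha> k * qf (sep C k) (IminusInv \<Sigma> (sep C k)) x else 0)))
      - ((\<Sum>k\<in>{1..K}. ldet \<Sigma> (C k))
        - ((\<Sum>k\<in>{1..K}. \<Sum>l\<in>Qset C K k. \<beta> l * ldet \<Sigma> (sep C l))
          + (\<Sum>k\<in>{1..K}. if 2 \<le> k then \<alpha> k * ldet \<Sigma> (sep C k) else 0)))"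
    by (simp add: sum_subtractf sum.distrib)
  also have "\<dots> = ?rhs"
    unfolding sum_separator_weights[OF img weights] ..
  finally show ?thesis .
qed

end

theorem mainTheorem1:
  fixes N K :: nat and E :: "nat set set" and C :: "nat \<Rightarrow> nat set"
    and \<Sigma> :: "nat \<Rightarrow> nat \<Rightarrow> real" and \<alpha> \<beta> :: "nat \<Rightarrow> real" and x :: "nat \<Rightarrow> real"
  assumes "ugraph {1..N} E"
    and "perfect_max_clique_seq {1..N} E C K"
    and "sym_pos_def_on {1..N} \<Sigma>"
    and "markov {1..N} E \<Sigma>"
    and "\<forall>k\<in>{2..K}. \<alpha> k + \<beta> k = 1"
  shows "Tstat {1..N} \<Sigma> x = (\<Sum>k\<in>{1..K}. Lloc C K \<Sigma> \<alpha> \<beta> k x)"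
proof -
  interpret perfect_markov N K E C \<Sigma>
    using assms(2-4) by unfold_locales
  show ?thesis
    unfolding Tstat_eq sum_Lloc[OF assms(5)] qf_IminusInv_eq_sum ldet_eq_sum ..
qed

end
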